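(* Let $\mathcal A$ be finite, $r:\mathcal A\to[0,1]$, $\eta>0$, and $\pi^{\mathrm{ref}}\in\Delta(\mathcal A)$ with $\pi^{\mathrm{ref}}(a)>0$ for all $a$. Let $\hat\pi\in\Delta(\mathcal A)$ be any distribution with $\mathrm{supp}(\hat\pi)=\mathcal A$. Then $$\mathrm{SubOpt}(\hat\pi)=\eta^{-1}\,\mathbb E_{a\sim\pi^{\mathrm{ref}}}\Big[\psi\Big(\frac{\hat\pi(a)}{\pi^*(a)}\Big)\Big],\qquad\text{where }\psi(x)=x-1-\log x.$$
   Context: $J(\pi)=\sum_ar(a)\pi(a)-\eta^{-1}\mathrm{KL}(\pi^{\mathrm{ref}}\|\pi)$ with $\mathrm{KL}(P\|Q)=\sum_aP(a)\log(P(a)/Q(a))$; $\pi^*$ is the unique maximizer of $J$ over $\Delta(\mathcal A)$; $\mathrm{SubOpt}(\pi)=J(\pi^* )-J(\pi)$. *)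

theory Defs
  imports "HOL-Analysis.Analysis"
begin

definition prob_simplex :: "'a set \<Rightarrow> ('a \<Rightarrow> real) set" where
  "prob_simplex A = {p. (\<forall>a\<in>A. 0 \<le> p a) \<and> (\<forall>a. a \<notin> A \<longrightarrow> p a = 0) \<and> sum p A = 1}"

definition KL :: "'a set \<Rightarrow> ('a \<Rightarrow> real) \<Rightarrow> ('a \<Rightarrow> real) \<Rightarrow> ereal" where
  "KL A P Q = (if \<exists>a\<in>A. P a > 0 \<and> Q a = 0 then \<infinity>
     else ereal (\<Sum>a\<in>A. if P a = 0 then 0 else P a * ln (P a / Q a)))"

definition Jobj :: "'a set \<Rightarrow> ('a \<Rightarrow> real) \<Rightarrow> real \<Rightarrow> ('a \<Rightarrow> real) \<Rightarrow> ('a \<Rightarrow> real) \<Rightarrow> ereal" where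
  "Jobj A r \<eta> piref p = ereal (\<Sum>a\<in>A. r a * p a) - ereal (1 / \<eta>) * KL A piref p"

definition pistar :: "'a set \<Rightarrow> ('a \<Rightarrow> real) \<Rightarrow> real \<Rightarrow> ('a \<Rightarrow> real) \<Rightarrow> ('a \<Rightarrow> real)" where
  "pistar A r \<eta> piref = (THE p. p \<in> prob_simplex A \<and> (\<forall>q\<in>prob_simplex A. Jobj A r \<eta> piref q \<le> Jobj A r \<eta> piref p))"

definition SubOpt :: "'a set \<Rightarrow> ('a \<Rightarrow> real) \<Rightarrow> real \<Rightarrow> ('a \<Rightarrow> real) \<Rightarrow> ('a \<Rightarrow> real) \<Rightarrow> ereal" where
  "SubOpt A r \<eta> piref p = Jobj A r \<eta> piref (pistar A r \<eta> piref) - Jobj A r \<eta> piref p"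

definition psi :: "real \<Rightarrow> real" where
  "psi x = x - 1 - ln x"

end

theory Submission
  imports Defs
begin

text \<open>The first-order condition for maximizing \<open>J\<close> reads
  \<open>\<pi>\<^sup>*(a) = \<pi>\<^sup>r\<^sup>e\<^sup>f(a) / (\<eta> (\<lambda> - r(a)))\<close>, and a multiplier \<open>\<lambda> > max r\<close> making this a
  distribution exists by the intermediate value theorem. Substituting
  \<open>r(a) = \<lambda> - \<pi>\<^sup>r\<^sup>e\<^sup>f(a) / (\<eta> \<pi>\<^sup>*(a))\<close> into \<open>J(\<pi>\<^sup>*) - J(\<pi>)\<close>, the \<open>\<lambda>\<close>-terms cancel because both
  policies sum to one, and what remains is exactly \<open>\<eta>\<^sup>-\<^sup>1 \<Sum> \<pi>\<^sup>r\<^sup>e\<^sup>f \<psi>(\<pi>/\<pi>\<^sup>*)\<close>. As \<open>\<psi> \<ge> 0\<close>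
  with equality only at \<open>1\<close>, and policies with a zero entry have \<open>J = -\<infinity>\<close>, the same
  identity shows that \<open>\<pi>\<^sup>*\<close> is the unique maximizer.\<close>

lemma psi_nonneg: "x > 0 \<Longrightarrow> psi x \<ge> 0"
  unfolding psi_def using ln_le_minus_one[of x] by simp

lemma psi_eq_0_iff: "x > 0 \<Longrightarrow> psi x = 0 \<longleftrightarrow> x = 1"
  unfolding psi_def using ln_eq_minus_one[of x] by auto

lemma exists_multiplier_sum_eq_1:
  fixes r c :: "'a \<Rightarrow> real"
  assumes fin: "finite A" and ne: "A \<noteq> {}" and pos: "\<forall>a\<in>A. c a > 0"
  shows "\<exists>l. (\<forall>a\<in>A. r a < l) \<and> (\<Sum>a\<in>A. c a / (l - r a)) = 1"
proof -
  define M where "M = Max (r ` A)"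
  have "M \<in> r ` A" unfolding M_def using fin ne by (intro Max_in) auto
  then obtain a0 where a0: "a0 \<in> A" "r a0 = M" by auto
  have le_M: "r a \<le> M" if "a \<in> A" for a
    unfolding M_def using fin that by auto
  define g where "g l = (\<Sum>a\<in>A. c a / (l - r a))" for l
  define l1 where "l1 = M + c a0"
  define l2 where "l2 = M + sum c A"
  have "M < l1" using pos a0 by (simp add: l1_def)
  have "l1 \<le> l2"
    unfolding l1_def l2_def using member_le_sum[OF a0(1) _ fin, of c] pos by (simp add: less_imp_le)
  have "1 \<le> g l1"
  proof -
    have "c a0 > 0" using pos a0 by blast
    then have "1 = c a0 / (l1 - r a0)" using a0 by (simp add: l1_def)
    also have "\<dots> \<le> g l1"
    proof -
      have "0 \<le> c a / (l1 - r a)" if "a \<in> A" for a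
        using pos le_M[OF that] \<open>M < l1\<close> that by (simp add: less_imp_le)
      then show ?thesis unfolding g_def using a0 fin by (intro member_le_sum) auto
    qed
    finally show ?thesis .
  qed
  have "g l2 \<le> (\<Sum>a\<in>A. c a / (l2 - M))"
    unfolding g_def
  proof (rule sum_mono)
    fix a assume a: "a \<in> A"
    have "0 < l2 - M" using \<open>M < l1\<close> \<open>l1 \<le> l2\<close> by simp
    moreover have "l2 - M \<le> l2 - r a" using le_M[OF a] by simp
    ultimately show "c a / (l2 - r a) \<le> c a / (l2 - M)"
      using pos a by (intro divide_left_mono mult_pos_pos) auto
  qed
  also have "\<dots> = 1"
    using \<open>M < l1\<close> \<open>l1 \<le> l2\<close> by (simp add: l2_def sum_divide_distrib[symmetric])
  finally have "g l2 \<le> 1" .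
  have "isCont g x" if "l1 \<le> x" for x
    unfolding g_def using that \<open>M < l1\<close> le_M by (intro continuous_intros) force
  then obtain l where "l1 \<le> l" "g l = 1"
    using IVT2[OF \<open>g l2 \<le> 1\<close> \<open>1 \<le> g l1\<close> \<open>l1 \<le> l2\<close>] by auto
  moreover have "r a < l" if "a \<in> A" for a
    using le_M[OF that] \<open>M < l1\<close> \<open>l1 \<le> l\<close> by simp
  ultimately show ?thesis by (auto simp: g_def)
qed

definition Jfin :: "'a set \<Rightarrow> ('a \<Rightarrow> real) \<Rightarrow> real \<Rightarrow> ('a \<Rightarrow> real) \<Rightarrow> ('a \<Rightarrow> real) \<Rightarrow> real" where
  "Jfin A r \<eta> piref p =
     (\<Sum>a\<in>A. r a * p a) - (1 / \<eta>) * (\<Sum>a\<in>A. piref a * ln (piref a / p a))"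

lemma Jobj_eq_Jfin:
  assumes "\<forall>a\<in>A. piref a > 0" and "\<forall>a\<in>A. p a > 0"
  shows "Jobj A r \<eta> piref p = ereal (Jfin A r \<eta> piref p)"
proof -
  have "KL A piref p = ereal (\<Sum>a\<in>A. piref a * ln (piref a / p a))"
    unfolding KL_def using assms by (auto intro!: sum.cong)
  then show ?thesis by (simp add: Jobj_def Jfin_def)
qed

lemma Jobj_eq_minf:
  assumes "\<eta> > 0" and "a \<in> A" and "piref a > 0" and "p a = 0"
  shows "Jobj A r \<eta> piref p = - \<infinity>"
proof -
  have "KL A piref p = \<infinity>" unfolding KL_def using assms by auto
  then show ?thesis using assms(1) by (simp add: Jobj_def)
qed

lemma prob_simplex_zero_entry:
  assumes "p \<in> prob_simplex A" and "\<not> (\<forall>a\<in>A. p a > 0)"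
  obtains a where "a \<in> A" "p a = 0"
  using assms by (force simp: prob_simplex_def)

text \<open>Hypothesis \<open>stat\<close> is the first-order condition for \<open>J\<close> at \<open>q\<close>, with \<open>l\<close> the
  Lagrange multiplier of the constraint \<open>\<Sum> q = 1\<close>.\<close>

lemma Jfin_diff_eq_psi_sum:
  assumes "\<eta> \<noteq> 0" and "\<forall>a\<in>A. piref a > 0" and "\<forall>a\<in>A. p a > 0" and "\<forall>a\<in>A. q a > 0"
    and stat: "\<forall>a\<in>A. \<eta> * q a * (l - r a) = piref a"
    and "sum p A = sum q A"
  shows "Jfin A r \<eta> piref q - Jfin A r \<eta> piref p =
    (1 / \<eta>) * (\<Sum>a\<in>A. piref a * psi (p a / q a))"
proof -
  have term_eq: "r a * q a - (1 / \<eta>) * (piref a * ln (piref a / q a))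
      - (r a * p a - (1 / \<eta>) * (piref a * ln (piref a / p a)))
    = (1 / \<eta>) * (piref a * psi (p a / q a)) + l * (q a - p a)" if "a \<in> A" for a
  proof -
    have pos: "piref a > 0" "p a > 0" "q a > 0" using assms that by auto
    have lin: "(1 / \<eta>) * (piref a * (p a / q a - 1)) = (l - r a) * (p a - q a)"
      using pos(3) \<open>\<eta> \<noteq> 0\<close>
      by (simp add: stat[rule_format, OF that, symmetric] field_simps)
    have ln_split: "ln (piref a / q a) = ln (piref a) - ln (q a)"
      "ln (piref a / p a) = ln (piref a) - ln (p a)"
      "ln (p a / q a) = ln (p a) - ln (q a)"
      using pos by (simp_all add: ln_div)
    show ?thesis
      unfolding psi_def ln_split using lin by (simp add: algebra_simps)
  qed
  have "Jfin A r \<eta> piref q - Jfin A r \<eta> piref p =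
      (\<Sum>a\<in>A. r a * q a - (1 / \<eta>) * (piref a * ln (piref a / q a))
        - (r a * p a - (1 / \<eta>) * (piref a * ln (piref a / p a))))"
    by (simp add: Jfin_def sum_subtractf sum_distrib_left)
  also have "\<dots> = (\<Sum>a\<in>A. (1 / \<eta>) * (piref a * psi (p a / q a)) + l * (q a - p a))"
    using term_eq by (rule sum.cong[OF refl])
  also have "\<dots> = (1 / \<eta>) * (\<Sum>a\<in>A. piref a * psi (p a / q a))"
    using \<open>sum p A = sum q A\<close>
    by (simp add: sum.distrib sum_distrib_left[symmetric] sum_subtractf sum_divide_distrib[symmetric])
  finally show ?thesis .
qed

locale kl_stationary_policy =
  fixes A :: "'a set" and r piref q :: "'a \<Rightarrow> real" and \<eta> l :: real
  assumes finite: "finite A" and eta_pos: "\<eta> > 0"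
    and piref_pos: "\<forall>a\<in>A. piref a > 0"
    and q_simplex: "q \<in> prob_simplex A" and q_pos: "\<forall>a\<in>A. q a > 0"
    and stationary: "\<forall>a\<in>A. \<eta> * q a * (l - r a) = piref a"
begin

lemma Jobj_diff_eq_psi_sum:
  assumes "p \<in> prob_simplex A" and p_pos: "\<forall>a\<in>A. p a > 0"
  shows "Jobj A r \<eta> piref q - Jobj A r \<eta> piref p =
    ereal ((1 / \<eta>) * (\<Sum>a\<in>A. piref a * psi (p a / q a)))"
proof -
  have "sum p A = sum q A" using assms(1) q_simplex by (simp add: prob_simplex_def)
  then show ?thesis
    using Jfin_diff_eq_psi_sum[of \<eta> A piref p q l r] eta_pos piref_pos p_pos q_pos stationary
    by (simp add: Jobj_eq_Jfin)
qed

lemma psi_sum_nonneg: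
  assumes "\<forall>a\<in>A. p a > 0"
  shows "(\<Sum>a\<in>A. piref a * psi (p a / q a)) \<ge> 0"
  using assms q_pos piref_pos by (intro sum_nonneg mult_nonneg_nonneg psi_nonneg) auto

lemma Jobj_le_stationary:
  assumes p: "p \<in> prob_simplex A"
  shows "Jobj A r \<eta> piref p \<le> Jobj A r \<eta> piref q"
proof (cases "\<forall>a\<in>A. p a > 0")
  case True
  have "0 \<le> (1 / \<eta>) * (\<Sum>a\<in>A. piref a * psi (p a / q a))"
    using psi_sum_nonneg[OF True] eta_pos by simp
  then show ?thesis
    using Jobj_diff_eq_psi_sum[OF p True] Jobj_eq_Jfin[OF piref_pos True]
      Jobj_eq_Jfin[OF piref_pos q_pos] by simp
next
  case False
  with p obtain a where "a \<in> A" "p a = 0" by (rule prob_simplex_zero_entry)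
  then have "Jobj A r \<eta> piref p = - \<infinity>" using eta_pos piref_pos by (intro Jobj_eq_minf) auto
  then show ?thesis by simp
qed

lemma maximizer_eq_stationary:
  assumes p: "p \<in> prob_simplex A" and le: "Jobj A r \<eta> piref q \<le> Jobj A r \<eta> piref p"
  shows "p = q"
proof -
  have p_pos: "\<forall>a\<in>A. p a > 0"
  proof (rule ccontr)
    assume "\<not> (\<forall>a\<in>A. p a > 0)"
    with p obtain a where "a \<in> A" "p a = 0" by (rule prob_simplex_zero_entry)
    then have "Jobj A r \<eta> piref p = - \<infinity>" using eta_pos piref_pos by (intro Jobj_eq_minf) auto
    then show False using le Jobj_eq_Jfin[OF piref_pos q_pos] by simp
  qed
  have "(1 / \<eta>) * (\<Sum>a\<in>A. piref a * psi (p a / q a)) \<le> 0"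
    using le Jobj_diff_eq_psi_sum[OF p p_pos] Jobj_eq_Jfin[OF piref_pos p_pos]
      Jobj_eq_Jfin[OF piref_pos q_pos] by simp
  then have "(\<Sum>a\<in>A. piref a * psi (p a / q a)) = 0"
    using psi_sum_nonneg[OF p_pos] eta_pos by (simp add: divide_le_0_iff)
  moreover have "0 \<le> piref a * psi (p a / q a)" if "a \<in> A" for a
    using p_pos q_pos piref_pos that by (intro mult_nonneg_nonneg psi_nonneg) auto
  ultimately have "\<forall>a\<in>A. psi (p a / q a) = 0"
    using piref_pos by (force simp: sum_nonneg_eq_0_iff[OF finite])
  then have "\<forall>a\<in>A. p a = q a"
    using psi_eq_0_iff p_pos q_pos by simp
  moreover have "\<forall>a. a \<notin> A \<longrightarrow> p a = q a"
    using p q_simplex by (simp add: prob_simplex_def)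
  ultimately show ?thesis by blast
qed

lemma pistar_eq: "pistar A r \<eta> piref = q"
  unfolding pistar_def
  using q_simplex Jobj_le_stationary maximizer_eq_stationary by (intro the_equality) auto

lemma SubOpt_eq_psi_sum:
  assumes "p \<in> prob_simplex A" and "\<forall>a\<in>A. p a > 0"
  shows "SubOpt A r \<eta> piref p = ereal ((1 / \<eta>) * (\<Sum>a\<in>A. piref a * psi (p a / q a)))"
  unfolding SubOpt_def pistar_eq using assms by (rule Jobj_diff_eq_psi_sum)

end

theorem lemmaE1:
  fixes A :: "'a set" and r piref pihat :: "'a \<Rightarrow> real" and \<eta> :: real
  assumes "finite A"
    and "\<forall>a\<in>A. 0 \<le> r a \<and> r a \<le> 1"
    and "\<eta> > 0"
    and "piref \<in> prob_simplex A" and "\<forall>a\<in>A. piref a > 0"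
    and "pihat \<in> prob_simplex A" and "\<forall>a\<in>A. pihat a > 0"
  shows "SubOpt A r \<eta> piref pihat =
    ereal ((1 / \<eta>) * (\<Sum>a\<in>A. piref a * psi (pihat a / pistar A r \<eta> piref a)))"
proof -
  note fin = assms(1) and eta = assms(3) and piref_pos = assms(5)
  have "A \<noteq> {}" using assms(4) by (auto simp: prob_simplex_def)
  moreover have "\<forall>a\<in>A. piref a / \<eta> > 0" using piref_pos eta by simp
  ultimately obtain l where l_gt: "\<forall>a\<in>A. r a < l"
    and l_sum: "(\<Sum>a\<in>A. piref a / \<eta> / (l - r a)) = 1"
    using exists_multiplier_sum_eq_1[OF fin, of "\<lambda>a. piref a / \<eta>" r] by blast
  define q where "q a = (if a \<in> A then piref a / (\<eta> * (l - r a)) else 0)" for a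
  have q_pos: "\<forall>a\<in>A. q a > 0" using l_gt piref_pos eta by (simp add: q_def)
  have "sum q A = 1" using l_sum by (simp add: q_def)
  then have "q \<in> prob_simplex A" using q_pos by (auto simp: prob_simplex_def q_def)
  moreover have "\<forall>a\<in>A. \<eta> * q a * (l - r a) = piref a" using l_gt eta by (force simp: q_def)
  ultimately interpret kl_stationary_policy A r piref q \<eta> l
    using fin eta piref_pos q_pos by unfold_locales
  show ?thesis using SubOpt_eq_psi_sum[OF assms(6,7)] by (simp add: pistar_eq)
qed

end
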